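(* Let $G$ be a graph not containing $K_{s,s}$. If $G$ contains a rich independent set of size $a$, then $G$ contains $H$ as an induced subgraph.
   Context: Let $H=(A,B;E)$ be a fixed bipartite graph with vertex classes $A$ and $B$ such that every vertex in $B$ has degree at most $k$ in $H$, and write $a=|A|$, $b=|B|$. Let $s$ be a positive integer. A set of vertices $S\subset V(G)$ is called rich if for every subset $T\subseteq S$ with $|T|\leq k$, there are at least $(4bs)^{b}$ vertices $v\in V(G)\setminus S$ with $N(v)\cap S=T$, i.e. which are adjacent to all vertices of $T$ and non-adjacent to all vertices of $S\setminus T$. *)

theory Defs
  imports Main
begin

definition graph :: "'v set \<Rightarrow> ('v \<Rightarrow> 'v \<Rightarrow> bool) \<Rightarrow> bool" where
  "graph V adj \<longleftrightarrow> finite V \<and> (\<forall>x y. adj x y \<longrightarrow> x \<in> V \<and> y \<in> V) \<and>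
     (\<forall>x y. adj x y \<longrightarrow> adj y x) \<and> (\<forall>x. \<not> adj x x)"

definition nbhd :: "'v set \<Rightarrow> ('v \<Rightarrow> 'v \<Rightarrow> bool) \<Rightarrow> 'v \<Rightarrow> 'v set" where
  "nbhd V adj v = {u \<in> V. adj v u}"

definition contains_Kss :: "'v set \<Rightarrow> ('v \<Rightarrow> 'v \<Rightarrow> bool) \<Rightarrow> nat \<Rightarrow> bool" where
  "contains_Kss V adj s \<longleftrightarrow> (\<exists>X Y. X \<subseteq> V \<and> Y \<subseteq> V \<and> X \<inter> Y = {} \<and>
     card X = s \<and> card Y = s \<and> (\<forall>x\<in>X. \<forall>y\<in>Y. adj x y))"

definition independent :: "('v \<Rightarrow> 'v \<Rightarrow> bool) \<Rightarrow> 'v set \<Rightarrow> bool" where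
  "independent adj S \<longleftrightarrow> (\<forall>x\<in>S. \<forall>y\<in>S. \<not> adj x y)"

definition rich :: "'v set \<Rightarrow> ('v \<Rightarrow> 'v \<Rightarrow> bool) \<Rightarrow> nat \<Rightarrow> nat \<Rightarrow> nat \<Rightarrow> 'v set \<Rightarrow> bool" where
  "rich V adj k b s S \<longleftrightarrow> S \<subseteq> V \<and>
     (\<forall>T. T \<subseteq> S \<and> card T \<le> k \<longrightarrow>
        card {v \<in> V - S. nbhd V adj v \<inter> S = T} \<ge> (4 * b * s) ^ b)"

definition induced_copy :: "'v set \<Rightarrow> ('v \<Rightarrow> 'v \<Rightarrow> bool) \<Rightarrow> 'h set \<Rightarrow> ('h \<times> 'h) set \<Rightarrow> bool" where
  "induced_copy V adj W E \<longleftrightarrow> (\<exists>f. inj_on f W \<and> f ` W \<subseteq> V \<and>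
     (\<forall>x\<in>W. \<forall>y\<in>W. adj (f x) (f y) \<longleftrightarrow> ((x, y) \<in> E \<or> (y, x) \<in> E)))"

end

theory Submission
  imports Defs "HOL-Library.FuncSet"
begin

text \<open>Fix a bijection \<open>g\<close> from \<open>A\<close> onto the rich independent set \<open>S\<close>. For \<open>y \<in> B\<close> the vertices
  outside \<open>S\<close> whose neighbourhood in \<open>S\<close> is exactly \<open>g ` N\<^sub>H(y)\<close> form a set \<open>C y\<close> with at least
  \<open>(4 b s)^b\<close> elements, because \<open>N\<^sub>H(y)\<close> has at most \<open>k\<close> elements. An induced copy of \<open>H\<close> is then
  the same as a choice of distinct, pairwise non-adjacent representatives of the sets \<open>C y\<close>.

  In a \<open>K\<^sub>s\<^sub>,\<^sub>s\<close>-free graph such representatives exist as soon as the \<open>n\<close> given sets have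
  \<open>(4 b s)^n\<close> elements each: choose the representative \<open>v\<close> of one set so that every other set
  keeps many vertices outside \<open>N(v) \<union> {v}\<close>, and recurse. Among \<open>(n - 1) s + 1\<close> candidates for \<open>v\<close>
  such a choice exists, for otherwise by pigeonhole \<open>s\<close> of them would fail for the same set \<open>D\<close>;
  then most of \<open>D\<close> would be a common neighbourhood of these \<open>s\<close> candidates, giving a \<open>K\<^sub>s\<^sub>,\<^sub>s\<close>.\<close>

lemma
  assumes "graph V adj"
  shows graph_finite: "finite V"
    and graph_adj_in: "adj x y \<Longrightarrow> x \<in> V \<and> y \<in> V"
    and graph_sym: "adj x y \<longleftrightarrow> adj y x"
    and graph_irrefl: "\<not> adj x x"
  using assms unfolding graph_def by auto

lemma mem_nbhd_iff: "graph V adj \<Longrightarrow> u \<in> nbhd V adj v \<longleftrightarrow> adj v u"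
  unfolding nbhd_def by (auto dest: graph_adj_in)

lemma independent_insert:
  assumes "graph V adj"
  shows "independent adj (insert v W) \<longleftrightarrow> independent adj W \<and> (\<forall>w\<in>W. \<not> adj v w)"
  using graph_sym[OF assms] graph_irrefl[OF assms] unfolding independent_def by blast

lemma Kss_free_common_nbhd_card_less:
  assumes G: "graph V adj" and noK: "\<not> contains_Kss V adj s"
    and X: "X \<subseteq> V" "card X = s"
  shows "card {y \<in> V. \<forall>x\<in>X. adj x y} < s"
proof (rule ccontr)
  assume "\<not> ?thesis"
  then obtain Y where Y: "Y \<subseteq> {y \<in> V. \<forall>x\<in>X. adj x y}" "card Y = s"
    by (meson not_less obtain_subset_with_card_n)
  have "X \<inter> Y = {}"
    using Y(1) graph_irrefl[OF G] by blast
  with X Y have "contains_Kss V adj s"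
    unfolding contains_Kss_def by blast
  with noK show False ..
qed

lemma Kss_free_exists_many_non_nbrs:
  assumes G: "graph V adj" and noK: "\<not> contains_Kss V adj s"
    and X: "X \<subseteq> V" "card X = s"
    and D: "D \<subseteq> V" "s * t + 2 * s \<le> card D"
  shows "\<exists>x\<in>X. t \<le> card (D - nbhd V adj x - {x})"
proof (rule ccontr)
  assume "\<not> ?thesis"
  then have few: "\<And>x. x \<in> X \<Longrightarrow> card (D - nbhd V adj x - {x}) \<le> t"
    by force
  have finV: "finite V" and finX: "finite X"
    using graph_finite[OF G] X(1) finite_subset by auto
  define Y where "Y = {y \<in> D. \<forall>x\<in>X. adj x y}"
  define U where "U = (\<Union>x\<in>X. D - nbhd V adj x - {x})"
  have "D \<subseteq> Y \<union> X \<union> U"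
    unfolding Y_def U_def using D(1) mem_nbhd_iff[OF G] by blast
  moreover have "finite (Y \<union> X \<union> U)"
    using D(1) X(1) finV unfolding Y_def U_def by (auto intro: finite_subset)
  ultimately have "card D \<le> card (Y \<union> X \<union> U)"
    by (simp add: card_mono)
  also have "\<dots> \<le> card Y + card X + card U"
    by (meson card_Un_le add_le_mono1 le_trans)
  finally have "card D \<le> card Y + card X + card U" .
  moreover have "card Y < s"
  proof -
    have "card Y \<le> card {y \<in> V. \<forall>x\<in>X. adj x y}"
      using D(1) finV unfolding Y_def by (intro card_mono) auto
    then show ?thesis
      using Kss_free_common_nbhd_card_less[OF G noK X] by linarith
  qed
  moreover have "card U \<le> s * t"
  proof -
    have "card U \<le> (\<Sum>x\<in>X. card (D - nbhd V adj x - {x}))"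
      unfolding U_def by (rule card_UN_le[OF finX])
    also have "\<dots> \<le> s * t"
      using sum_bounded_above[of X _ t] few X(2) by auto
    finally show ?thesis .
  qed
  ultimately show False
    using D(2) X(2) by linarith
qed

lemma Kss_free_exists_good_candidate:
  assumes G: "graph V adj" and noK: "\<not> contains_Kss V adj s"
    and I: "finite I" and C: "\<forall>j\<in>I. C j \<subseteq> V \<and> s * t + 2 * s \<le> card (C j)"
    and X0: "X0 \<subseteq> V" "card I * s < card X0"
  shows "\<exists>v\<in>X0. \<forall>j\<in>I. t \<le> card (C j - nbhd V adj v - {v})"
proof (rule ccontr)
  assume "\<not> ?thesis"
  then obtain J where J: "\<And>v. v \<in> X0 \<Longrightarrow> J v \<in> I \<and> card (C (J v) - nbhd V adj v - {v}) < t"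
    by (metis not_le)
  have finX0: "finite X0"
    using X0(1) graph_finite[OF G] finite_subset by blast
  have "X0 \<noteq> {}"
    using X0(2) by auto
  then have "I \<noteq> {}"
    using J by blast
  then obtain j where j: "j \<in> I" "card X0 \<le> card (J -` {j} \<inter> X0) * card I"
    using pigeonhole_card[of J X0 I] J finX0 I by blast
  have "s \<le> card (J -` {j} \<inter> X0)"
  proof (rule ccontr)
    assume "\<not> ?thesis"
    then have "card (J -` {j} \<inter> X0) * card I \<le> card I * s"
      by (simp add: mult.commute)
    with j(2) X0(2) show False by linarith
  qed
  then obtain X where X: "X \<subseteq> J -` {j} \<inter> X0" "card X = s"
    by (meson obtain_subset_with_card_n)
  then obtain x where "x \<in> X" "t \<le> card (C j - nbhd V adj x - {x})"
    using Kss_free_exists_many_non_nbrs[OF G noK _ X(2), of "C j" t] X0(1) C j(1) by blast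
  with X J show False
    by fastforce
qed

lemma threshold_Suc_bounds:
  fixes n N s :: nat
  assumes "n < N" "0 < s"
  shows "n * s + 1 \<le> (4 * N * s) ^ Suc n"
    and "s * (4 * N * s) ^ n + 2 * s \<le> (4 * N * s) ^ Suc n"
proof -
  define P where "P = (4 * N * s) ^ n"
  have P: "1 \<le> P"
    using assms by (simp add: P_def)
  have "n * s + 1 \<le> Suc n * s"
    using assms(2) by simp
  also have "\<dots> \<le> N * s"
    using assms(1) by (intro mult_le_mono1) simp
  also have "\<dots> \<le> N * s * P"
    using P by simp
  also have "\<dots> \<le> 4 * N * s * P"
    by simp
  finally show "n * s + 1 \<le> (4 * N * s) ^ Suc n"
    by (simp add: P_def mult.assoc)
  have "s * P + 2 * s \<le> s * P + 2 * s * P"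
    using P by simp
  also have "\<dots> \<le> 4 * N * s * P"
    using assms by (simp add: algebra_simps)
  finally show "s * (4 * N * s) ^ n + 2 * s \<le> (4 * N * s) ^ Suc n"
    by (simp add: P_def mult.assoc)
qed

lemma Kss_free_independent_transversal:
  assumes G: "graph V adj" and noK: "\<not> contains_Kss V adj s" and s: "0 < s"
    and "finite I" "card I \<le> N"
    and "\<forall>i\<in>I. C i \<subseteq> V \<and> (4 * N * s) ^ card I \<le> card (C i)"
  shows "\<exists>f. inj_on f I \<and> (\<forall>i\<in>I. f i \<in> C i) \<and> independent adj (f ` I)"
  using assms(4-)
proof (induction I arbitrary: C rule: finite_induct)
  case empty
  then show ?case
    by (simp add: independent_def)
next
  case (insert i I)
  define t where "t = (4 * N * s) ^ card I"
  have IN: "card I < N"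
    using insert by simp
  with s insert.hyps have big: "card I * s + 1 \<le> card (C j)" "s * t + 2 * s \<le> card (C j)"
    if "j \<in> insert i I" for j
    using threshold_Suc_bounds[of "card I" N s] insert.prems(2) that unfolding t_def by force+
  obtain X0 where X0: "X0 \<subseteq> C i" "card X0 = card I * s + 1"
    using big(1)[of i] by (meson insertI1 obtain_subset_with_card_n)
  then obtain v where v: "v \<in> X0" "\<forall>j\<in>I. t \<le> card (C j - nbhd V adj v - {v})"
    using Kss_free_exists_good_candidate[OF G noK insert.hyps(1), of C t X0] insert.prems(2) big(2)
    by fastforce
  define C' where "C' j = C j - nbhd V adj v - {v}" for j
  have "\<forall>j\<in>I. C' j \<subseteq> V \<and> t \<le> card (C' j)"
    using insert.prems(2) v(2) unfolding C'_def by blast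
  then obtain f where f: "inj_on f I" "\<forall>j\<in>I. f j \<in> C' j" "independent adj (f ` I)"
    using insert.IH[of C'] IN unfolding t_def by auto
  have v_free: "v \<notin> f ` I" "\<forall>w\<in>f ` I. \<not> adj v w"
    using f(2) insert.prems(2) mem_nbhd_iff[OF G] unfolding C'_def by auto
  have img: "f(i := v) ` I = f ` I"
    using insert.hyps(2) by auto
  have "inj_on (f(i := v)) (insert i I)"
    using inj_on_fun_updI[OF f(1) v_free(1)] img v_free(1) insert.hyps(2) by simp
  moreover have "\<forall>j\<in>insert i I. (f(i := v)) j \<in> C j"
    using f(2) v(1) X0(1) unfolding C'_def by auto
  moreover have "independent adj (f(i := v) ` insert i I)"
  proof -
    have "f(i := v) ` insert i I = insert v (f ` I)"
      using img by (simp only: image_insert fun_upd_same)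
    then show ?thesis
      using f(3) v_free(2) independent_insert[OF G] by presburger
  qed
  ultimately show ?case
    by blast
qed

lemma induced_copy_bipartiteI:
  assumes G: "graph V adj" and H: "A \<inter> B = {}" "E \<subseteq> A \<times> B"
    and g: "inj_on g A" "g ` A \<subseteq> V" "independent adj (g ` A)"
    and f: "inj_on f B" "independent adj (f ` B)"
    and trace: "\<forall>y\<in>B. f y \<in> V - g ` A \<and> nbhd V adj (f y) \<inter> g ` A = g ` {x \<in> A. (x, y) \<in> E}"
  shows "induced_copy V adj (A \<union> B) E"
proof -
  define F where "F x = (if x \<in> A then g x else f x)" for x
  have F_A: "F x = g x" if "x \<in> A" for x
    using that unfolding F_def by simp
  have F_B: "F y = f y" if "y \<in> B" for y
    using that H(1) unfolding F_def by auto
  have cross: "adj (F x) (F y) \<longleftrightarrow> (x, y) \<in> E" if "x \<in> A" "y \<in> B" for x y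
  proof -
    have "adj (F x) (F y) \<longleftrightarrow> adj (f y) (g x)"
      using that F_A F_B graph_sym[OF G] by simp
    also have "\<dots> \<longleftrightarrow> g x \<in> nbhd V adj (f y) \<inter> g ` A"
      using that(1) mem_nbhd_iff[OF G] by simp
    also have "\<dots> \<longleftrightarrow> g x \<in> g ` {x \<in> A. (x, y) \<in> E}"
      using trace that(2) by simp
    also have "\<dots> \<longleftrightarrow> (x, y) \<in> E"
      using inj_on_image_mem_iff[OF g(1) that(1)] that(1) by blast
    finally show ?thesis .
  qed
  have "inj_on F (A \<union> B)"
  proof -
    have "inj_on F A" "inj_on F B"
      using inj_on_cong[of A F g, OF F_A] inj_on_cong[of B F f, OF F_B] g(1) f(1) by blast+
    moreover have "F ` A \<inter> F ` B = {}"
    proof -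
      have "g x \<noteq> f y" if "x \<in> A" "y \<in> B" for x y
        using trace that by (metis DiffD2 imageI)
      then show ?thesis
        using F_A F_B by fastforce
    qed
    ultimately show ?thesis
      by (auto simp: inj_on_Un)
  qed
  moreover have "F ` (A \<union> B) \<subseteq> V"
    using F_A F_B g(2) trace by auto
  moreover have "adj (F x) (F y) \<longleftrightarrow> (x, y) \<in> E \<or> (y, x) \<in> E"
    if "x \<in> A \<union> B" "y \<in> A \<union> B" for x y
  proof -
    have "\<not> adj (F x) (F y)" "(x, y) \<notin> E" "(y, x) \<notin> E" if "x \<in> A" "y \<in> A"
      using that F_A g(3) H unfolding independent_def by auto
    moreover have "\<not> adj (F x) (F y)" "(x, y) \<notin> E" "(y, x) \<notin> E" if "x \<in> B" "y \<in> B"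
      using that F_B f(2) H unfolding independent_def by auto
    moreover have "(y, x) \<notin> E" if "x \<in> A" "y \<in> B"
      using that H by auto
    moreover have "(x, y) \<notin> E" if "x \<in> B" "y \<in> A"
      using that H by auto
    ultimately show ?thesis
      using that cross graph_sym[OF G] by blast
  qed
  ultimately show ?thesis
    unfolding induced_copy_def by blast
qed

theorem lemma2p3:
  fixes V :: "'v set" and adj :: "'v \<Rightarrow> 'v \<Rightarrow> bool"
    and A B :: "'h set" and E :: "('h \<times> 'h) set" and k s :: nat
  assumes G: "graph V adj"
    and H_fin: "finite A" "finite B"
    and H_bip: "A \<inter> B = {}" "E \<subseteq> A \<times> B"
    and H_deg: "\<forall>v\<in>B. card {u \<in> A. (u, v) \<in> E} \<le> k"
    and s_pos: "s > 0"
    and noKss: "\<not> contains_Kss V adj s"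
    and rich_set: "\<exists>S. card S = card A \<and> independent adj S \<and> rich V adj k (card B) s S"
  shows "induced_copy V adj (A \<union> B) E"
proof -
  obtain S where S: "card S = card A" "independent adj S" "rich V adj k (card B) s S"
    using rich_set by blast
  have SV: "S \<subseteq> V"
    using S(3) unfolding rich_def by blast
  then obtain g where g: "bij_betw g A S"
    using finite_same_card_bij[OF H_fin(1)] S(1) graph_finite[OF G] finite_subset by metis
  define C where "C y = {v \<in> V - S. nbhd V adj v \<inter> S = g ` {u \<in> A. (u, y) \<in> E}}" for y
  have "C y \<subseteq> V \<and> (4 * card B * s) ^ card B \<le> card (C y)" if "y \<in> B" for y
  proof -
    have "card (g ` {u \<in> A. (u, y) \<in> E}) \<le> card {u \<in> A. (u, y) \<in> E}"
      using H_fin(1) by (simp add: card_image_le)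
    also have "\<dots> \<le> k"
      using H_deg that by blast
    finally have "card (g ` {u \<in> A. (u, y) \<in> E}) \<le> k" .
    moreover have "g ` {u \<in> A. (u, y) \<in> E} \<subseteq> S"
      using g unfolding bij_betw_def by blast
    ultimately show ?thesis
      using S(3) unfolding rich_def C_def by blast
  qed
  then obtain f where f: "inj_on f B" "\<forall>y\<in>B. f y \<in> C y" "independent adj (f ` B)"
    using Kss_free_independent_transversal[OF G noKss s_pos H_fin(2) le_refl, of C] by blast
  show ?thesis
    using induced_copy_bipartiteI[OF G H_bip, of g f] g S(2) SV f(1,3) f(2)
    unfolding bij_betw_def C_def by auto
qed

end
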